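(* Let $a > 3$ be irrational and let $t$ be a positive integer. Define \[ U = \#\left\{(x,y)\in\mathbb{Z}^2 : x \ge 0,\ x + a y \ge \tfrac{t(a+3)}{12},\ x + 3y \le \tfrac{t}{2}\right\}, \] \[ D = \#\left\{(x,y)\in\mathbb{Z}^2 : y \ge 0,\ x + 3y \ge \tfrac{t}{2},\ x + a y \le \tfrac{t(a+3)}{12}\right\}. \] Then $U \le D$. Moreover, if $t \equiv 4 \pmod{12}$, then $U \le D - 1$.
   Context: Geometrically, $U$ counts lattice points in the region bounded by the $y$-axis, the line $L_1: \frac{12}{a+3}x + \frac{12a}{a+3}y = t$ and the line $L_2: 2x+6y=t$ (lying above $L_1$ and on or below $L_2$), and $D$ counts lattice points in the region bounded by $L_1$, $L_2$ and the $x$-axis (on or above $L_2$ and below $L_1$); the lines $L_1$, $L_2$ meet at $(t/4, t/12)$. *)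

theory Defs
  imports Complex_Main
begin

definition U_count :: "real \<Rightarrow> nat \<Rightarrow> nat" where
  "U_count a t = card {(x::int, y::int). 0 \<le> x \<and>
      real_of_int x + a * real_of_int y \<ge> real t * (a + 3) / 12 \<and>
      real_of_int x + 3 * real_of_int y \<le> real t / 2}"

definition D_count :: "real \<Rightarrow> nat \<Rightarrow> nat" where
  "D_count a t = card {(x::int, y::int). 0 \<le> y \<and>
      real_of_int x + 3 * real_of_int y \<ge> real t / 2 \<and>
      real_of_int x + a * real_of_int y \<le> real t * (a + 3) / 12}"

end

theory Submission
  imports Defs
begin

text \<open>Both regions are cut out by the lines \<open>L\<^sub>1: x + a y = t(a+3)/12\<close> and
  \<open>L\<^sub>2: x + 3 y = t/2\<close>, which meet at height \<open>y = t/12\<close>; since \<open>a > 3\<close>, the upper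
  region lies on or above that height and the lower region on or below it. A point
  reflection of the lattice mapping \<open>L\<^sub>2\<close> to itself sends the upper region injectively into the
  lower one, so \<open>U \<le> D\<close>. For \<open>t = 12k + 4\<close> its fixed point \<open>(3k + 2, k)\<close> lies in the
  lower region strictly below height \<open>t/12\<close>, hence is missed by the image.\<close>

definition U_set :: "real \<Rightarrow> nat \<Rightarrow> (int \<times> int) set" where
  "U_set a t = {(x, y). 0 \<le> x \<and>
      real_of_int x + a * real_of_int y \<ge> real t * (a + 3) / 12 \<and>
      real_of_int x + 3 * real_of_int y \<le> real t / 2}"

definition D_set :: "real \<Rightarrow> nat \<Rightarrow> (int \<times> int) set" where
  "D_set a t = {(x, y). 0 \<le> y \<and>
      real_of_int x + 3 * real_of_int y \<ge> real t / 2 \<and>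
      real_of_int x + a * real_of_int y \<le> real t * (a + 3) / 12}"

lemma U_count_eq_card_U_set: "U_count a t = card (U_set a t)"
  by (simp add: U_count_def U_set_def)

lemma D_count_eq_card_D_set: "D_count a t = card (D_set a t)"
  by (simp add: D_count_def D_set_def)

lemma U_set_above_intersection:
  assumes "a > 3" and "(x, y) \<in> U_set a t"
  shows "real t / 12 \<le> real_of_int y"
proof -
  have L1: "real t * (a + 3) / 12 \<le> real_of_int x + a * real_of_int y"
    and L2: "real_of_int x + 3 * real_of_int y \<le> real t / 2"
    using assms(2) by (auto simp: U_set_def)
  have "(a - 3) * real_of_int y - (a - 3) * (real t / 12)
      = (real_of_int x + a * real_of_int y - real t * (a + 3) / 12)
        + (real t / 2 - (real_of_int x + 3 * real_of_int y))"
    by (simp add: field_simps)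
  then have "(a - 3) * (real t / 12) \<le> (a - 3) * real_of_int y"
    using L1 L2 by linarith
  then show ?thesis using assms(1) by simp
qed

lemma D_set_below_intersection:
  assumes "a > 3" and "(x, y) \<in> D_set a t"
  shows "real_of_int y \<le> real t / 12"
proof -
  have "(a - 3) * real_of_int y \<le> (a - 3) * (real t / 12)"
    using assms(2) by (auto simp: D_set_def algebra_simps)
  then show ?thesis using assms(1) by simp
qed

lemma finite_D_set:
  assumes "a > 3"
  shows "finite (D_set a t)"
proof -
  define N where "N = \<lceil>real t * (a + 3) / 12\<rceil>"
  have "D_set a t \<subseteq> {0..N} \<times> {0..int t}"
  proof
    fix z assume z: "z \<in> D_set a t"
    then obtain x y where z_eq: "z = (x, y)" and "0 \<le> y"
      and L2: "real t / 2 \<le> real_of_int x + 3 * real_of_int y"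
      and L1: "real_of_int x + a * real_of_int y \<le> real t * (a + 3) / 12"
      by (auto simp: D_set_def)
    have y_le: "real_of_int y \<le> real t / 12"
      using D_set_below_intersection[OF assms] z z_eq by simp
    have "0 \<le> a * real_of_int y" using assms \<open>0 \<le> y\<close> by simp
    then have "x \<le> N" using L1 by (simp add: N_def le_ceiling_iff)
    moreover have "0 \<le> x" using L2 y_le by linarith
    moreover have "y \<le> int t" using y_le by linarith
    ultimately show "z \<in> {0..N} \<times> {0..int t}" using z_eq \<open>0 \<le> y\<close> by auto
  qed
  then show ?thesis by (rule finite_subset) auto
qed

text \<open>The point reflection through \<open>(p/2, q/2)\<close> with \<open>q = \<lfloor>t/6\<rfloor>\<close>, \<open>p = t - 3q\<close>; it maps \<open>L\<^sub>2\<close>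
  to itself and, as \<open>6q \<le> t\<close>, the half-plane above \<open>L\<^sub>1\<close> into the half-plane below it.\<close>

definition reflect_U_to_D :: "nat \<Rightarrow> int \<times> int \<Rightarrow> int \<times> int" where
  "reflect_U_to_D t = (\<lambda>(x, y). (int t - 3 * (int t div 6) - x, int t div 6 - y))"

lemma inj_reflect_U_to_D: "inj (reflect_U_to_D t)"
  by (auto simp: inj_def reflect_U_to_D_def)

lemma reflect_U_to_D_image_subset:
  assumes "a > 3"
  shows "reflect_U_to_D t ` U_set a t \<subseteq> D_set a t"
proof
  fix w assume "w \<in> reflect_U_to_D t ` U_set a t"
  then obtain x y where xy: "(x, y) \<in> U_set a t"
    and w: "w = (int t - 3 * (int t div 6) - x, int t div 6 - y)"
    by (auto simp: reflect_U_to_D_def)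
  define q where "q = int t div 6"
  have x_ge: "0 \<le> x"
    and L1: "real t * (a + 3) / 12 \<le> real_of_int x + a * real_of_int y"
    and L2: "real_of_int x + 3 * real_of_int y \<le> real t / 2"
    using xy by (auto simp: U_set_def)
  have "6 * y \<le> int t" using x_ge L2 by linarith
  then have y_le_q: "y \<le> q" unfolding q_def by linarith
  have "real_of_int (6 * q) \<le> real t" unfolding q_def by linarith
  then have "0 \<le> (a - 3) * (real t / 6 - real_of_int q)"
    using assms by (intro mult_nonneg_nonneg) auto
  then have "real_of_int (int t - 3 * q - x) + a * real_of_int (q - y)
      \<le> real t * (a + 3) / 12"
    using L1 by (simp add: field_simps)
  moreover have "real t / 2 \<le> real_of_int (int t - 3 * q - x) + 3 * real_of_int (q - y)"
    using L2 by simp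
  ultimately show "w \<in> D_set a t"
    using y_le_q by (simp add: w D_set_def q_def)
qed

lemma card_U_set_le_card_D_set:
  assumes "a > 3"
  shows "card (U_set a t) \<le> card (D_set a t)"
  using card_inj_on_le[OF inj_on_subset[OF inj_reflect_U_to_D subset_UNIV]
      reflect_U_to_D_image_subset[OF assms] finite_D_set[OF assms]] .

lemma D_set_point_outside_reflected_U_set:
  assumes "a > 3" and "int t = 12 * k + 4" and "0 \<le> k"
  shows "(3 * k + 2, k) \<in> D_set a t - reflect_U_to_D t ` U_set a t"
proof -
  have t_real: "real t = 12 * real_of_int k + 4"
    using assms(2) by (metis of_int_add of_int_mult of_int_numeral of_int_of_nat_eq)
  have q: "int t div 6 = 2 * k" using assms(2) by presburger
  have "(3 * k + 2, k) \<in> D_set a t"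
    using assms(1,3) t_real by (auto simp: D_set_def algebra_simps)
  moreover have "(3 * k + 2, k) \<notin> reflect_U_to_D t ` U_set a t"
  proof
    assume "(3 * k + 2, k) \<in> reflect_U_to_D t ` U_set a t"
    then obtain x where "(x, k) \<in> U_set a t"
      using q by (auto simp: reflect_U_to_D_def)
    from U_set_above_intersection[OF assms(1) this] show False
      using t_real by linarith
  qed
  ultimately show ?thesis by blast
qed

lemma card_U_set_less_card_D_set:
  assumes "a > 3" and "t mod 12 = 4"
  shows "card (U_set a t) < card (D_set a t)"
proof -
  obtain k where k: "int t = 12 * k + 4" "0 \<le> k"
    using assms(2) by (intro that[of "int t div 12"]) (auto, presburger)
  have "reflect_U_to_D t ` U_set a t \<subset> D_set a t"
    using reflect_U_to_D_image_subset[OF assms(1)]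
      D_set_point_outside_reflected_U_set[OF assms(1) k] by blast
  then have "card (reflect_U_to_D t ` U_set a t) < card (D_set a t)"
    by (rule psubset_card_mono[OF finite_D_set[OF assms(1)]])
  then show ?thesis
    by (simp add: card_image inj_on_subset[OF inj_reflect_U_to_D subset_UNIV])
qed

theorem lemma2p9:
  fixes a :: real and t :: nat
  assumes "a > 3" and "a \<notin> \<rat>" and "t > 0"
  shows "U_count a t \<le> D_count a t \<and>
         (t mod 12 = 4 \<longrightarrow> int (U_count a t) \<le> int (D_count a t) - 1)"
  using card_U_set_le_card_D_set[OF assms(1)] card_U_set_less_card_D_set[OF assms(1)]
  by (fastforce simp: U_count_eq_card_U_set D_count_eq_card_D_set)

end
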